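(* For every algebraic type $\tau$, $\mathsf{FiCA}_\tau=\mathbb{I}\,\mathsf{BLK}_\tau$: a clone $\tau$-algebra is finite dimensional if and only if it is isomorphic to a block $\tau$-algebra.
   Context: Let $\omega=\{1,2,\dots\}$. A clone $\tau$-algebra is an algebra $\mathbf C=(C,\sigma^{\mathbf C}\ (\sigma\in\tau),q_n^{\mathbf C}\ (n\ge0),\mathsf e_i^{\mathbf C}\ (i\ge1))$ with $\mathsf e_i$ nullary and $q_n$ of arity $n+1$ satisfying: (C1) $q_n(\mathsf e_i,x_1,\dots,x_n)=x_i$ ($1\le i\le n$); (C2) $q_n(\mathsf e_j,x_1,\dots,x_n)=\mathsf e_j$ ($j>n$); (C3) $q_n(x,\mathsf e_1,\dots,\mathsf e_n)=x$; (C4) $q_k(x,y_1,\dots,y_k)=q_n(x,y_1,\dots,y_k,\mathsf e_{k+1},\dots,\mathsf e_n)$ ($n>k$); (C5) $q_n(q_n(x,\mathbf y),\mathbf z)=q_n(x,q_n(y_1,\mathbf z),\dots,q_n(y_n,\mathbf z))$; (C6) $q_n(\sigma(x_1,\dots,x_k),\mathbf y)=\sigma(q_n(x_1,\mathbf y),\dots,q_n(x_k,\mathbf y))$ for $\sigma\in\tau$ of arity $k$. An element $a$ is independent of $\mathsf e_n$ if $q_n(a,\mathsf e_1,\dots,\mathsf e_{n-1},\mathsf e_{n+1})=a$; $a$ has finite dimension if it is dependent on only finitely many $\mathsf e_n$. $\mathsf{FiCA}_\tau$ is the class of clone $\tau$-algebras all of whose elements have finite dimension. For a $\tau$-algebra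 $\mathbf A$, the full functional clone $\tau$-algebra with value domain $\mathbf A$ has universe all functions $A^\omega\to A$ and operations $\mathsf e_i(s)=s_i$, $q_n(\varphi,\psi_1,\dots,\psi_n)(s)=\varphi(s[\psi_1(s),\dots,\psi_n(s)])$ (where $s[b_1,\dots,b_n]$ replaces the first $n$ entries of $s$ by the $b_i$), $\sigma(\psi_1,\dots,\psi_n)(s)=\sigma^{\mathbf A}(\psi_1(s),\dots,\psi_n(s))$. The top extension of a finitary $f:A^n\to A$ ($n\ge0$) is $f^\top(s)=f(s_1,\dots,s_n)$. $\mathsf{BLK}_\tau$ is the class of subalgebras of full functional clone $\tau$-algebras (over any $\tau$-algebra $\mathbf A$) whose elements are all top extensions of finitary operations on $A$. $\mathbb I$ denotes closure under isomorphic copies. *)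

theory Defs
  imports "HOL-Library.FuncSet"
begin

text \<open>An algebraic type tau is given by a type of operation symbols 'sym together
  with an arity function ar. Variables e_i are indexed by i >= 1 (e 0 is unused).
  q n x ys stands for q_n(x, y_1, ..., y_n) where ys = [y_1, ..., y_n].\<close>

definition tau_alg :: "('sym \<Rightarrow> nat) \<Rightarrow> 'a set \<Rightarrow> ('sym \<Rightarrow> 'a list \<Rightarrow> 'a) \<Rightarrow> bool" where
  "tau_alg ar A F \<longleftrightarrow> (\<forall>\<sigma> xs. length xs = ar \<sigma> \<and> set xs \<subseteq> A \<longrightarrow> F \<sigma> xs \<in> A)"

definition clone_sig_alg :: "('sym \<Rightarrow> nat) \<Rightarrow> 'c set \<Rightarrow> ('sym \<Rightarrow> 'c list \<Rightarrow> 'c)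
    \<Rightarrow> (nat \<Rightarrow> 'c \<Rightarrow> 'c list \<Rightarrow> 'c) \<Rightarrow> (nat \<Rightarrow> 'c) \<Rightarrow> bool" where
  "clone_sig_alg ar C sig q e \<longleftrightarrow>
     tau_alg ar C sig \<and>
     (\<forall>n x ys. x \<in> C \<and> length ys = n \<and> set ys \<subseteq> C \<longrightarrow> q n x ys \<in> C) \<and>
     (\<forall>i\<ge>1. e i \<in> C)"

definition clone_alg :: "('sym \<Rightarrow> nat) \<Rightarrow> 'c set \<Rightarrow> ('sym \<Rightarrow> 'c list \<Rightarrow> 'c)
    \<Rightarrow> (nat \<Rightarrow> 'c \<Rightarrow> 'c list \<Rightarrow> 'c) \<Rightarrow> (nat \<Rightarrow> 'c) \<Rightarrow> bool" where
  "clone_alg ar C sig q e \<longleftrightarrow>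
     clone_sig_alg ar C sig q e \<and>
     \<comment> \<open>(C1)\<close>
     (\<forall>n ys i. length ys = n \<and> set ys \<subseteq> C \<and> 1 \<le> i \<and> i \<le> n \<longrightarrow> q n (e i) ys = ys ! (i - 1)) \<and>
     \<comment> \<open>(C2)\<close>
     (\<forall>n ys j. length ys = n \<and> set ys \<subseteq> C \<and> j > n \<longrightarrow> q n (e j) ys = e j) \<and>
     \<comment> \<open>(C3)\<close>
     (\<forall>n x. x \<in> C \<longrightarrow> q n x (map e [1..<n+1]) = x) \<and>
     \<comment> \<open>(C4)\<close>
     (\<forall>n k x ys. n > k \<and> x \<in> C \<and> length ys = k \<and> set ys \<subseteq> C \<longrightarrow>
        q k x ys = q n x (ys @ map e [k+1..<n+1])) \<and>
     \<comment> \<open>(C5)\<close>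
     (\<forall>n x ys zs. x \<in> C \<and> length ys = n \<and> set ys \<subseteq> C \<and> length zs = n \<and> set zs \<subseteq> C \<longrightarrow>
        q n (q n x ys) zs = q n x (map (\<lambda>y. q n y zs) ys)) \<and>
     \<comment> \<open>(C6)\<close>
     (\<forall>n \<sigma> xs ys. length xs = ar \<sigma> \<and> set xs \<subseteq> C \<and> length ys = n \<and> set ys \<subseteq> C \<longrightarrow>
        q n (sig \<sigma> xs) ys = sig \<sigma> (map (\<lambda>x. q n x ys) xs))"

definition indep_of :: "(nat \<Rightarrow> 'c \<Rightarrow> 'c list \<Rightarrow> 'c) \<Rightarrow> (nat \<Rightarrow> 'c) \<Rightarrow> 'c \<Rightarrow> nat \<Rightarrow> bool" where
  "indep_of q e a n \<longleftrightarrow> q n a (map e [1..<n] @ [e (n+1)]) = a"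

definition finite_dim :: "(nat \<Rightarrow> 'c \<Rightarrow> 'c list \<Rightarrow> 'c) \<Rightarrow> (nat \<Rightarrow> 'c) \<Rightarrow> 'c \<Rightarrow> bool" where
  "finite_dim q e a \<longleftrightarrow> finite {n. n \<ge> 1 \<and> \<not> indep_of q e a n}"

definition FiCA :: "('sym \<Rightarrow> nat) \<Rightarrow> 'c set \<Rightarrow> ('sym \<Rightarrow> 'c list \<Rightarrow> 'c)
    \<Rightarrow> (nat \<Rightarrow> 'c \<Rightarrow> 'c list \<Rightarrow> 'c) \<Rightarrow> (nat \<Rightarrow> 'c) \<Rightarrow> bool" where
  "FiCA ar C sig q e \<longleftrightarrow> clone_alg ar C sig q e \<and> (\<forall>a\<in>C. finite_dim q e a)"

text \<open>Functional clone algebras. A sequence s in A^omega is represented 0-based: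
  s k stands for s_{k+1}. Functions A^omega -> A are represented extensionally
  (value undefined outside A^omega).\<close>

definition seqs :: "'a set \<Rightarrow> (nat \<Rightarrow> 'a) set" where
  "seqs A = {s. \<forall>k. s k \<in> A}"

definition full_fun :: "'a set \<Rightarrow> ((nat \<Rightarrow> 'a) \<Rightarrow> 'a) set" where
  "full_fun A = seqs A \<rightarrow>\<^sub>E A"

definition fe :: "'a set \<Rightarrow> nat \<Rightarrow> (nat \<Rightarrow> 'a) \<Rightarrow> 'a" where
  "fe A i = restrict (\<lambda>s. s (i - 1)) (seqs A)"

definition fq :: "'a set \<Rightarrow> nat \<Rightarrow> ((nat \<Rightarrow> 'a) \<Rightarrow> 'a) \<Rightarrow> ((nat \<Rightarrow> 'a) \<Rightarrow> 'a) list
    \<Rightarrow> (nat \<Rightarrow> 'a) \<Rightarrow> 'a" where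
  "fq A n \<phi> \<psi>s = restrict (\<lambda>s. \<phi> (\<lambda>k. if k < n then (\<psi>s ! k) s else s k)) (seqs A)"

definition fsig :: "'a set \<Rightarrow> ('sym \<Rightarrow> 'a list \<Rightarrow> 'a) \<Rightarrow> 'sym \<Rightarrow> ((nat \<Rightarrow> 'a) \<Rightarrow> 'a) list
    \<Rightarrow> (nat \<Rightarrow> 'a) \<Rightarrow> 'a" where
  "fsig A F \<sigma> \<psi>s = restrict (\<lambda>s. F \<sigma> (map (\<lambda>\<psi>. \<psi> s) \<psi>s)) (seqs A)"

definition finitary_op :: "'a set \<Rightarrow> nat \<Rightarrow> ('a list \<Rightarrow> 'a) \<Rightarrow> bool" where
  "finitary_op A n f \<longleftrightarrow> (\<forall>xs. length xs = n \<and> set xs \<subseteq> A \<longrightarrow> f xs \<in> A)"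

definition top_ext :: "'a set \<Rightarrow> nat \<Rightarrow> ('a list \<Rightarrow> 'a) \<Rightarrow> (nat \<Rightarrow> 'a) \<Rightarrow> 'a" where
  "top_ext A n f = restrict (\<lambda>s. f (map s [0..<n])) (seqs A)"

definition block_alg :: "('sym \<Rightarrow> nat) \<Rightarrow> 'a set \<Rightarrow> ('sym \<Rightarrow> 'a list \<Rightarrow> 'a)
    \<Rightarrow> ((nat \<Rightarrow> 'a) \<Rightarrow> 'a) set \<Rightarrow> bool" where
  "block_alg ar A F B \<longleftrightarrow>
     tau_alg ar A F \<and>
     B \<subseteq> full_fun A \<and>
     clone_sig_alg ar B (fsig A F) (fq A) (fe A) \<and>
     (\<forall>\<phi>\<in>B. \<exists>n f. finitary_op A n f \<and> \<phi> = top_ext A n f)"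

definition clone_iso :: "('sym \<Rightarrow> nat)
    \<Rightarrow> 'c set \<Rightarrow> ('sym \<Rightarrow> 'c list \<Rightarrow> 'c) \<Rightarrow> (nat \<Rightarrow> 'c \<Rightarrow> 'c list \<Rightarrow> 'c) \<Rightarrow> (nat \<Rightarrow> 'c)
    \<Rightarrow> 'd set \<Rightarrow> ('sym \<Rightarrow> 'd list \<Rightarrow> 'd) \<Rightarrow> (nat \<Rightarrow> 'd \<Rightarrow> 'd list \<Rightarrow> 'd) \<Rightarrow> (nat \<Rightarrow> 'd)
    \<Rightarrow> ('c \<Rightarrow> 'd) \<Rightarrow> bool" where
  "clone_iso ar C sig q e D sig' q' e' h \<longleftrightarrow>
     bij_betw h C D \<and>
     (\<forall>i\<ge>1. h (e i) = e' i) \<and>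
     (\<forall>\<sigma> xs. length xs = ar \<sigma> \<and> set xs \<subseteq> C \<longrightarrow> h (sig \<sigma> xs) = sig' \<sigma> (map h xs)) \<and>
     (\<forall>n x ys. x \<in> C \<and> length ys = n \<and> set ys \<subseteq> C \<longrightarrow> h (q n x ys) = q' n (h x) (map h ys))"

end

(*
  A clone algebra that is isomorphic to a block algebra satisfies the clone axioms (C1)-(C6)
  because the full functional clone algebra does and an injective homomorphism reflects
  equations; it is finite dimensional because the top extension of an n-ary operation is
  independent of every e_m with m > n.

  Conversely, let a be independent of every e_m with m > d.  For N > d, independence of e_N
  lets the last argument of q_N(a, y_1, ..., y_N) be replaced by e_(N+1) and then by e_N,
  which (C4) strips off; hence q_N(a, y_1, ..., y_N) = q_d(a, y_1, ..., y_d) for all N >= d.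
  So a is represented by the top extension of the d-ary operation
  (y_1, ..., y_d) |-> q_d(a, y_1, ..., y_d) on C itself.  Axioms (C1) and (C4)-(C6) make this
  representation a homomorphism of clone algebras, and (C3) makes it injective: evaluating
  at the sequence e_1, e_2, ... gives back a.
*)
theory Submission
  imports Defs
begin

declare upt_Suc[simp del]

locale clone_sig_algebra =
  fixes ar :: "'sym \<Rightarrow> nat" and C :: "'c set" and sig q e
  assumes clone_sig_alg: "clone_sig_alg ar C sig q e"
begin

lemma sig_closed: "\<lbrakk>length xs = ar \<sigma>; set xs \<subseteq> C\<rbrakk> \<Longrightarrow> sig \<sigma> xs \<in> C"
  using clone_sig_alg by (simp add: clone_sig_alg_def tau_alg_def)

lemma q_closed: "\<lbrakk>x \<in> C; length ys = n; set ys \<subseteq> C\<rbrakk> \<Longrightarrow> q n x ys \<in> C"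
  using clone_sig_alg by (auto simp: clone_sig_alg_def)

lemma e_closed: "1 \<le> i \<Longrightarrow> e i \<in> C"
  using clone_sig_alg by (simp add: clone_sig_alg_def)

end

locale clone_algebra = clone_sig_algebra +
  assumes q_var: "\<lbrakk>length ys = n; set ys \<subseteq> C; 1 \<le> i; i \<le> n\<rbrakk> \<Longrightarrow> q n (e i) ys = ys ! (i - 1)"
    and q_var_beyond: "\<lbrakk>length ys = n; set ys \<subseteq> C; n < j\<rbrakk> \<Longrightarrow> q n (e j) ys = e j"
    and q_vars: "x \<in> C \<Longrightarrow> q n x (map e [1..<n+1]) = x"
    and q_pad_vars: "\<lbrakk>k < n; x \<in> C; length ys = k; set ys \<subseteq> C\<rbrakk> \<Longrightarrow>
      q k x ys = q n x (ys @ map e [k+1..<n+1])"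
    and q_q: "\<lbrakk>x \<in> C; length ys = n; set ys \<subseteq> C; length zs = n; set zs \<subseteq> C\<rbrakk> \<Longrightarrow>
      q n (q n x ys) zs = q n x (map (\<lambda>y. q n y zs) ys)"
    and q_sig: "\<lbrakk>length xs = ar \<sigma>; set xs \<subseteq> C; length ys = n; set ys \<subseteq> C\<rbrakk> \<Longrightarrow>
      q n (sig \<sigma> xs) ys = sig \<sigma> (map (\<lambda>x. q n x ys) xs)"

lemma clone_algebra_iff_clone_alg: "clone_algebra ar C sig q e \<longleftrightarrow> clone_alg ar C sig q e"
  unfolding clone_algebra_def clone_algebra_axioms_def clone_sig_algebra_def clone_alg_def by auto

section \<open>The full functional clone algebra\<close>

lemma full_fun_extensional: "\<phi> \<in> full_fun A \<Longrightarrow> \<phi> \<in> extensional (seqs A)"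
  by (auto simp: full_fun_def PiE_def)

lemma full_fun_in_carrier: "\<phi> \<in> full_fun A \<Longrightarrow> s \<in> seqs A \<Longrightarrow> \<phi> s \<in> A"
  by (auto simp: full_fun_def)

lemma fq_apply: "s \<in> seqs A \<Longrightarrow> fq A n \<phi> \<psi>s s = \<phi> (\<lambda>k. if k < n then (\<psi>s ! k) s else s k)"
  by (simp add: fq_def)

lemma fe_apply: "s \<in> seqs A \<Longrightarrow> fe A i s = s (i - 1)"
  by (simp add: fe_def)

lemma fsig_apply: "s \<in> seqs A \<Longrightarrow> fsig A F \<sigma> \<psi>s s = F \<sigma> (map (\<lambda>\<psi>. \<psi> s) \<psi>s)"
  by (simp add: fsig_def)

lemma top_ext_apply: "s \<in> seqs A \<Longrightarrow> top_ext A n f s = f (map s [0..<n])"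
  by (simp add: top_ext_def)

lemma fq_extensional: "fq A n \<phi> \<psi>s \<in> extensional (seqs A)"
  by (simp add: fq_def)

lemma seqs_update:
  assumes "s \<in> seqs A" "length \<psi>s = n" "set \<psi>s \<subseteq> full_fun A"
  shows "(\<lambda>k. if k < n then (\<psi>s ! k) s else s k) \<in> seqs A"
  using assms full_fun_in_carrier[OF subsetD[OF assms(3) nth_mem]] by (auto simp: seqs_def)

lemma image_seqs_subset: "s \<in> seqs A \<Longrightarrow> s ` K \<subseteq> A"
  by (auto simp: seqs_def)

lemma fe_in_full_fun: "fe A i \<in> full_fun A"
  by (auto simp: full_fun_def fe_def seqs_def)

lemma fq_in_full_fun:
  assumes "\<phi> \<in> full_fun A" "length \<psi>s = n" "set \<psi>s \<subseteq> full_fun A"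
  shows "fq A n \<phi> \<psi>s \<in> full_fun A"
proof -
  have "fq A n \<phi> \<psi>s s \<in> A" if "s \<in> seqs A" for s
    using that assms by (simp add: fq_apply full_fun_in_carrier seqs_update)
  then show ?thesis by (auto simp: full_fun_def fq_def)
qed

lemma fsig_in_full_fun:
  assumes "tau_alg ar A F" "length \<psi>s = ar \<sigma>" "set \<psi>s \<subseteq> full_fun A"
  shows "fsig A F \<sigma> \<psi>s \<in> full_fun A"
proof -
  have "fsig A F \<sigma> \<psi>s s \<in> A" if "s \<in> seqs A" for s
  proof -
    have "set (map (\<lambda>\<psi>. \<psi> s) \<psi>s) \<subseteq> A"
      using that assms(3) full_fun_in_carrier by auto
    then show ?thesis using that assms(1,2) by (simp add: fsig_apply tau_alg_def)
  qed
  then show ?thesis by (auto simp: full_fun_def fsig_def)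
qed

lemma fq_fe:
  assumes "length ys = n" "set ys \<subseteq> full_fun A" "1 \<le> i" "i \<le> n"
  shows "fq A n (fe A i) ys = ys ! (i - 1)"
proof (rule extensionalityI[OF fq_extensional])
  show "ys ! (i - 1) \<in> extensional (seqs A)"
    using assms by (intro full_fun_extensional) auto
  fix s assume s: "s \<in> seqs A"
  then show "fq A n (fe A i) ys s = (ys ! (i - 1)) s"
    using assms seqs_update[OF s assms(1,2)] by (simp add: fq_apply fe_apply less_diff_conv2)
qed

lemma fq_fe_beyond:
  assumes "length ys = n" "set ys \<subseteq> full_fun A" "n < j"
  shows "fq A n (fe A j) ys = fe A j"
proof (rule extensionalityI[OF fq_extensional])
  show "fe A j \<in> extensional (seqs A)" by (simp add: fe_def)
  fix s assume s: "s \<in> seqs A"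
  moreover have "\<not> j - 1 < n" using assms(3) by simp
  ultimately show "fq A n (fe A j) ys s = fe A j s"
    using seqs_update[OF s assms(1,2)] by (simp add: fq_apply fe_apply)
qed

lemma fq_fe_vars:
  assumes "\<phi> \<in> full_fun A"
  shows "fq A n \<phi> (map (fe A) [1..<n+1]) = \<phi>"
proof (rule extensionalityI[OF fq_extensional full_fun_extensional[OF assms]])
  fix s assume s: "s \<in> seqs A"
  have "(\<lambda>k. if k < n then (map (fe A) [1..<n+1] ! k) s else s k) = s"
    using s by (auto simp: fe_apply)
  then show "fq A n \<phi> (map (fe A) [1..<n+1]) s = \<phi> s"
    unfolding fq_apply[OF s] by (simp only:)
qed

lemma fq_pad_fe:
  assumes "k < n" "length ys = k"
  shows "fq A k \<phi> ys = fq A n \<phi> (ys @ map (fe A) [k+1..<n+1])"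
proof (rule extensionalityI[OF fq_extensional fq_extensional])
  fix s assume s: "s \<in> seqs A"
  have "(\<lambda>j. if j < k then (ys ! j) s else s j) =
        (\<lambda>j. if j < n then ((ys @ map (fe A) [k+1..<n+1]) ! j) s else s j)"
    using assms s by (auto simp: nth_append fe_apply)
  then show "fq A k \<phi> ys s = fq A n \<phi> (ys @ map (fe A) [k+1..<n+1]) s"
    unfolding fq_apply[OF s] by (simp only:)
qed

lemma fq_fq:
  assumes "length ys = n" "length zs = n" "set zs \<subseteq> full_fun A"
  shows "fq A n (fq A n \<phi> ys) zs = fq A n \<phi> (map (\<lambda>y. fq A n y zs) ys)"
proof (rule extensionalityI[OF fq_extensional fq_extensional])
  fix s assume s: "s \<in> seqs A"
  have "(\<lambda>k. if k < n then (zs ! k) s else s k) \<in> seqs A"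
    using seqs_update[OF s assms(2,3)] .
  then show "fq A n (fq A n \<phi> ys) zs s = fq A n \<phi> (map (\<lambda>y. fq A n y zs) ys) s"
    using s assms(1) by (simp add: fq_apply cong: if_cong)
qed

lemma fq_fsig:
  assumes "length ys = n" "set ys \<subseteq> full_fun A"
  shows "fq A n (fsig A F \<sigma> xs) ys = fsig A F \<sigma> (map (\<lambda>x. fq A n x ys) xs)"
proof (rule extensionalityI[OF fq_extensional])
  show "fsig A F \<sigma> (map (\<lambda>x. fq A n x ys) xs) \<in> extensional (seqs A)"
    by (simp add: fsig_def)
  fix s assume s: "s \<in> seqs A"
  then show "fq A n (fsig A F \<sigma> xs) ys s = fsig A F \<sigma> (map (\<lambda>x. fq A n x ys) xs) s"
    using seqs_update[OF s assms] by (simp add: fq_apply fsig_apply o_def)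
qed

lemma clone_sig_alg_full_fun:
  assumes "tau_alg ar A F"
  shows "clone_sig_alg ar (full_fun A) (fsig A F) (fq A) (fe A)"
  unfolding clone_sig_alg_def tau_alg_def
  using fsig_in_full_fun[OF assms] by (auto intro: fq_in_full_fun fe_in_full_fun)

lemma clone_algebra_full_fun:
  assumes "tau_alg ar A F"
  shows "clone_algebra ar (full_fun A) (fsig A F) (fq A) (fe A)"
proof
  show "clone_sig_alg ar (full_fun A) (fsig A F) (fq A) (fe A)"
    using assms by (rule clone_sig_alg_full_fun)
qed (blast intro: fq_fe fq_fe_beyond fq_fe_vars fq_pad_fe fq_fq fq_fsig)+

lemma indep_of_top_ext:
  assumes "n < m"
  shows "indep_of (fq A) (fe A) (top_ext A n f) m"
  unfolding indep_of_def
proof (rule extensionalityI[OF fq_extensional])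
  show "top_ext A n f \<in> extensional (seqs A)" by (simp add: top_ext_def)
  fix s assume s: "s \<in> seqs A"
  let ?t = "\<lambda>k. if k < m then ((map (fe A) [1..<m] @ [fe A (m+1)]) ! k) s else s k"
  have t: "?t \<in> seqs A"
    using s assms by (intro seqs_update) (auto simp: fe_in_full_fun)
  have "map ?t [0..<n] = map s [0..<n]"
    using assms s by (auto simp: fe_apply nth_append)
  then show "fq A m (top_ext A n f) (map (fe A) [1..<m] @ [fe A (m+1)]) s = top_ext A n f s"
    by (simp only: fq_apply[OF s] top_ext_apply[OF s] top_ext_apply[OF t])
qed

lemma finite_dim_top_ext: "finite_dim (fq A) (fe A) (top_ext A n f)"
proof -
  have "{m. 1 \<le> m \<and> \<not> indep_of (fq A) (fe A) (top_ext A n f) m} \<subseteq> {..n}"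
    using indep_of_top_ext[of n _ A f] leI by blast
  then show ?thesis unfolding finite_dim_def by (rule finite_subset) simp
qed

section \<open>Isomorphic copies of block algebras are finite dimensional\<close>

locale clone_embedding =
  source: clone_sig_algebra ar C sig q e + target: clone_algebra ar D sig' q' e'
  for ar :: "'sym \<Rightarrow> nat" and C :: "'c set" and sig q e and D :: "'d set" and sig' q' e' +
  fixes h :: "'c \<Rightarrow> 'd"
  assumes maps_into: "x \<in> C \<Longrightarrow> h x \<in> D"
    and inj: "inj_on h C"
    and hom_e: "1 \<le> i \<Longrightarrow> h (e i) = e' i"
    and hom_sig: "\<lbrakk>length xs = ar \<sigma>; set xs \<subseteq> C\<rbrakk> \<Longrightarrow> h (sig \<sigma> xs) = sig' \<sigma> (map h xs)"
    and hom_q: "\<lbrakk>x \<in> C; length ys = n; set ys \<subseteq> C\<rbrakk> \<Longrightarrow> h (q n x ys) = q' n (h x) (map h ys)"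
begin

lemma set_map_maps_into: "set ys \<subseteq> C \<Longrightarrow> set (map h ys) \<subseteq> D"
  using maps_into by auto

lemma map_hom_e: "1 \<le> a \<Longrightarrow> map h (map e [a..<b]) = map e' [a..<b]"
  using hom_e by auto

lemma reflect_eq: "\<lbrakk>x \<in> C; y \<in> C; h x = h y\<rbrakk> \<Longrightarrow> x = y"
  using inj by (rule inj_onD)

lemma source_q_var:
  assumes "length ys = n" "set ys \<subseteq> C" "1 \<le> i" "i \<le> n"
  shows "q n (e i) ys = ys ! (i - 1)"
proof (rule reflect_eq)
  have "h (q n (e i) ys) = q' n (e' i) (map h ys)"
    using assms by (simp add: hom_q hom_e source.e_closed)
  also have "\<dots> = h (ys ! (i - 1))"
    using assms set_map_maps_into[OF assms(2)] by (simp add: target.q_var)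
  finally show "h (q n (e i) ys) = h (ys ! (i - 1))" .
qed (use assms in \<open>auto simp: source.q_closed source.e_closed\<close>)

lemma source_q_var_beyond:
  assumes "length ys = n" "set ys \<subseteq> C" "n < j"
  shows "q n (e j) ys = e j"
proof (rule reflect_eq)
  have "h (q n (e j) ys) = q' n (e' j) (map h ys)"
    using assms by (simp add: hom_q hom_e source.e_closed)
  also have "\<dots> = h (e j)"
    using assms set_map_maps_into[OF assms(2)] by (simp add: target.q_var_beyond hom_e)
  finally show "h (q n (e j) ys) = h (e j)" .
qed (use assms in \<open>auto simp: source.q_closed source.e_closed\<close>)

lemma source_q_vars:
  assumes "x \<in> C"
  shows "q n x (map e [1..<n+1]) = x"
proof (rule reflect_eq)
  have "h (q n x (map e [1..<n+1])) = q' n (h x) (map h (map e [1..<n+1]))"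
    using assms source.e_closed by (intro hom_q) auto
  also have "map h (map e [1..<n+1]) = map e' [1..<n+1]"
    by (rule map_hom_e) simp
  also have "q' n (h x) \<dots> = h x"
    using maps_into[OF assms] by (rule target.q_vars)
  finally show "h (q n x (map e [1..<n+1])) = h x" .
qed (use assms source.e_closed in \<open>auto intro!: source.q_closed\<close>)

lemma source_q_pad_vars:
  assumes "k < n" "x \<in> C" "length ys = k" "set ys \<subseteq> C"
  shows "q k x ys = q n x (ys @ map e [k+1..<n+1])"
proof (rule reflect_eq)
  have padded: "set (ys @ map e [k+1..<n+1]) \<subseteq> C"
    using assms(4) source.e_closed by auto
  then show "q n x (ys @ map e [k+1..<n+1]) \<in> C"
    using assms by (intro source.q_closed) auto
  have "h (q k x ys) = q' k (h x) (map h ys)"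
    using assms by (simp add: hom_q)
  also have "\<dots> = q' n (h x) (map h ys @ map e' [k+1..<n+1])"
    using assms maps_into set_map_maps_into[OF assms(4)] by (simp add: target.q_pad_vars)
  also have "\<dots> = h (q n x (ys @ map e [k+1..<n+1]))"
    using assms padded by (simp add: hom_q flip: map_hom_e)
  finally show "h (q k x ys) = h (q n x (ys @ map e [k+1..<n+1]))" .
qed (use assms in \<open>simp add: source.q_closed\<close>)

lemma source_q_q:
  assumes "x \<in> C" "length ys = n" "set ys \<subseteq> C" "length zs = n" "set zs \<subseteq> C"
  shows "q n (q n x ys) zs = q n x (map (\<lambda>y. q n y zs) ys)"
proof (rule reflect_eq)
  have substituted: "set (map (\<lambda>y. q n y zs) ys) \<subseteq> C"
    using assms by (auto simp: source.q_closed)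
  then show "q n x (map (\<lambda>y. q n y zs) ys) \<in> C"
    using assms by (intro source.q_closed) auto
  have "h (q n (q n x ys) zs) = q' n (q' n (h x) (map h ys)) (map h zs)"
    using assms by (simp add: hom_q source.q_closed)
  also have "\<dots> = q' n (h x) (map (\<lambda>y. q' n y (map h zs)) (map h ys))"
    using assms maps_into set_map_maps_into by (simp add: target.q_q)
  also have "map (\<lambda>y. q' n y (map h zs)) (map h ys) = map h (map (\<lambda>y. q n y zs) ys)"
    using assms by (auto simp: hom_q)
  also have "q' n (h x) \<dots> = h (q n x (map (\<lambda>y. q n y zs) ys))"
    using assms substituted by (simp add: hom_q)
  finally show "h (q n (q n x ys) zs) = h (q n x (map (\<lambda>y. q n y zs) ys))" .
qed (use assms in \<open>simp add: source.q_closed\<close>)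

lemma source_q_sig:
  assumes "length xs = ar \<sigma>" "set xs \<subseteq> C" "length ys = n" "set ys \<subseteq> C"
  shows "q n (sig \<sigma> xs) ys = sig \<sigma> (map (\<lambda>x. q n x ys) xs)"
proof (rule reflect_eq)
  have substituted: "set (map (\<lambda>x. q n x ys) xs) \<subseteq> C"
    using assms by (auto simp: source.q_closed)
  then show "sig \<sigma> (map (\<lambda>x. q n x ys) xs) \<in> C"
    using assms by (intro source.sig_closed) auto
  have "h (q n (sig \<sigma> xs) ys) = q' n (sig' \<sigma> (map h xs)) (map h ys)"
    using assms by (simp add: hom_q hom_sig source.sig_closed)
  also have "\<dots> = sig' \<sigma> (map (\<lambda>x. q' n x (map h ys)) (map h xs))"
    using assms set_map_maps_into by (simp add: target.q_sig)
  also have "map (\<lambda>x. q' n x (map h ys)) (map h xs) = map h (map (\<lambda>x. q n x ys) xs)"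
    using assms by (auto simp: hom_q)
  also have "sig' \<sigma> \<dots> = h (sig \<sigma> (map (\<lambda>x. q n x ys) xs))"
    using assms substituted by (simp add: hom_sig)
  finally show "h (q n (sig \<sigma> xs) ys) = h (sig \<sigma> (map (\<lambda>x. q n x ys) xs))" .
qed (use assms in \<open>simp add: source.q_closed source.sig_closed\<close>)

sublocale source: clone_algebra ar C sig q e
  by unfold_locales (fact source_q_var source_q_var_beyond source_q_vars
      source_q_pad_vars source_q_q source_q_sig)+

lemma indep_of_reflect:
  assumes "a \<in> C" "1 \<le> m" "indep_of q' e' (h a) m"
  shows "indep_of q e a m"
  unfolding indep_of_def
proof (rule reflect_eq)
  let ?es = "map e [1..<m] @ [e (m+1)]"
  have es: "set ?es \<subseteq> C" "length ?es = m"
    using assms(2) source.e_closed by auto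
  then show "q m a ?es \<in> C"
    using assms(1) by (intro source.q_closed) auto
  have "h (q m a ?es) = q' m (h a) (map e' [1..<m] @ [e' (m+1)])"
    using assms(1) es by (simp add: hom_q hom_e flip: map_hom_e)
  also have "\<dots> = h a"
    using assms(3) by (simp add: indep_of_def)
  finally show "h (q m a ?es) = h a" .
qed (fact assms(1))

lemma finite_dim_reflect:
  assumes "a \<in> C" "finite_dim q' e' (h a)"
  shows "finite_dim q e a"
proof -
  have "{m. 1 \<le> m \<and> \<not> indep_of q e a m} \<subseteq> {m. 1 \<le> m \<and> \<not> indep_of q' e' (h a) m}"
    using indep_of_reflect[OF assms(1)] by blast
  then show ?thesis
    using assms(2) unfolding finite_dim_def by (rule finite_subset)
qed

end

lemma FiCA_if_iso_block_alg:
  assumes "clone_sig_alg ar C sig q e" "block_alg ar A F B"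
    and "clone_iso ar C sig q e B (fsig A F) (fq A) (fe A) h"
  shows "FiCA ar C sig q e"
proof -
  have B: "B \<subseteq> full_fun A" and top_exts: "\<And>\<phi>. \<phi> \<in> B \<Longrightarrow> \<exists>n f. \<phi> = top_ext A n f"
    using assms(2) unfolding block_alg_def by blast+
  interpret clone_embedding ar C sig q e "full_fun A" "fsig A F" "fq A" "fe A" h
  proof (rule clone_embedding.intro)
    show "clone_sig_algebra ar C sig q e"
      using assms(1) by (rule clone_sig_algebra.intro)
    show "clone_algebra ar (full_fun A) (fsig A F) (fq A) (fe A)"
      using assms(2) by (intro clone_algebra_full_fun) (simp add: block_alg_def)
    show "clone_embedding_axioms ar C sig q e (full_fun A) (fsig A F) (fq A) (fe A) h"
      using assms(3) B unfolding clone_embedding_axioms_def clone_iso_def bij_betw_def by auto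
  qed
  have "finite_dim q e a" if "a \<in> C" for a
  proof -
    have "h a \<in> B" using that assms(3) by (auto simp: clone_iso_def bij_betw_def)
    then obtain n f where "h a = top_ext A n f" using top_exts by blast
    then show ?thesis using that finite_dim_top_ext finite_dim_reflect by metis
  qed
  then show ?thesis
    using source.clone_algebra_axioms by (simp add: FiCA_def clone_algebra_iff_clone_alg)
qed

section \<open>Finite dimensional clone algebras are block algebras\<close>

lemma set_subset_imageE:
  assumes "set xs \<subseteq> f ` A"
  obtains as where "xs = map f as" "set as \<subseteq> A"
proof -
  have "xs \<in> lists (f ` A)"
    using assms by auto
  then have "xs \<in> map f ` lists A"
    by (simp only: lists_image)
  then show ?thesis
    using that by (auto simp: lists_eq_set)
qed

context clone_algebra
begin

lemma map_q_vars:
  assumes "length zs = n" "set zs \<subseteq> C" "b \<le> n"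
  shows "map (\<lambda>i. q n (e i) zs) [a+1..<b+1] = drop a (take b zs)"
proof (rule nth_equalityI)
  fix k assume "k < length (map (\<lambda>i. q n (e i) zs) [a+1..<b+1])"
  then show "map (\<lambda>i. q n (e i) zs) [a+1..<b+1] ! k = drop a (take b zs) ! k"
    using assms by (simp add: q_var)
qed (use assms in simp)

lemma q_indep_last:
  assumes "a \<in> C" "indep_of q e a n" "1 \<le> n" "length zs = n" "set zs \<subseteq> C"
  shows "q n a zs = q n a (butlast zs @ [e (n+1)])"
proof -
  let ?es = "map e [1..<n] @ [e (n+1)]"
  have es: "length ?es = n" "set ?es \<subseteq> C"
    using assms(3) e_closed by auto
  have "q n a zs = q n (q n a ?es) zs"
    using assms(2) by (simp add: indep_of_def)
  also have "\<dots> = q n a (map (\<lambda>y. q n y zs) ?es)"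
    using assms es by (intro q_q) auto
  also have "map (\<lambda>y. q n y zs) ?es = butlast zs @ [e (n+1)]"
  proof -
    have "map (\<lambda>i. q n (e i) zs) [0+1..<(n-1)+1] = butlast zs"
      using assms by (subst map_q_vars) (auto simp: butlast_conv_take)
    then show ?thesis
      using assms(3-5) by (simp add: q_var_beyond o_def)
  qed
  finally show ?thesis .
qed

lemma q_indep_drop_last:
  assumes "a \<in> C" "indep_of q e a n" "1 \<le> n" "length ys = n" "set ys \<subseteq> C"
  shows "q n a ys = q (n - 1) a (butlast ys)"
proof -
  have init: "length (butlast ys) = n - 1" "set (butlast ys) \<subseteq> C"
    using assms(4,5) by (auto dest: in_set_butlastD)
  have "q n a ys = q n a (butlast ys @ [e (n+1)])"
    using assms by (rule q_indep_last)
  also have "\<dots> = q n a (butlast ys @ [e n])"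
    using assms(1-3) init e_closed by (subst q_indep_last) auto
  also have "\<dots> = q n a (butlast ys @ map e [n-1+1..<n+1])"
    using assms(3) by (simp add: upt_Suc)
  also have "\<dots> = q (n - 1) a (butlast ys)"
    using assms(1,3) init by (intro q_pad_vars[symmetric]) auto
  finally show ?thesis .
qed

end

locale finite_dim_clone_algebra = clone_algebra ar C sig q e
  for ar :: "'sym \<Rightarrow> nat" and C :: "'c set" and sig q e +
  assumes finite_dim: "a \<in> C \<Longrightarrow> finite_dim q e a"
begin

definition dim_of :: "'c \<Rightarrow> nat" where
  "dim_of a = Max (insert 0 {n. 1 \<le> n \<and> \<not> indep_of q e a n})"

lemma indep_of_beyond_dim:
  assumes "a \<in> C" "dim_of a < n"
  shows "indep_of q e a n"
proof (rule ccontr)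
  assume "\<not> indep_of q e a n"
  moreover have "finite {n. 1 \<le> n \<and> \<not> indep_of q e a n}"
    using finite_dim[OF assms(1)] by (simp add: finite_dim_def)
  ultimately have "n \<le> dim_of a"
    using assms(2) unfolding dim_of_def by (intro Max_ge) auto
  then show False using assms(2) by simp
qed

lemma q_truncate_dim:
  assumes "a \<in> C"
  shows "\<lbrakk>dim_of a \<le> n; length ys = n; set ys \<subseteq> C\<rbrakk> \<Longrightarrow> q n a ys = q (dim_of a) a (take (dim_of a) ys)"
proof (induction n arbitrary: ys)
  case (Suc n)
  show ?case
  proof (cases "dim_of a = Suc n")
    case False
    then have "dim_of a \<le> n" using Suc.prems by simp
    have "q (Suc n) a ys = q n a (butlast ys)"
      using assms Suc.prems \<open>dim_of a \<le> n\<close>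
      by (subst q_indep_drop_last) (auto intro: indep_of_beyond_dim)
    also have "\<dots> = q (dim_of a) a (take (dim_of a) (butlast ys))"
      using Suc.prems \<open>dim_of a \<le> n\<close> by (intro Suc.IH) (auto dest: in_set_butlastD)
    also have "take (dim_of a) (butlast ys) = take (dim_of a) ys"
      using Suc.prems \<open>dim_of a \<le> n\<close> by (simp add: butlast_conv_take)
    finally show ?thesis .
  qed (use Suc.prems in simp)
qed simp

definition fun_rep :: "'c \<Rightarrow> (nat \<Rightarrow> 'c) \<Rightarrow> 'c" where
  "fun_rep a = top_ext C (dim_of a) (q (dim_of a) a)"

lemma fun_rep_apply:
  assumes "a \<in> C" "dim_of a \<le> n" "s \<in> seqs C"
  shows "fun_rep a s = q n a (map s [0..<n])"
proof -
  have "fun_rep a s = q (dim_of a) a (take (dim_of a) (map s [0..<n]))"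
    using assms by (simp add: fun_rep_def top_ext_apply take_map)
  also have "\<dots> = q n a (map s [0..<n])"
    using assms by (intro q_truncate_dim[symmetric]) (auto simp: image_seqs_subset)
  finally show ?thesis .
qed

lemma fun_rep_extensional: "fun_rep a \<in> extensional (seqs C)"
  by (simp add: fun_rep_def top_ext_def)

lemma fun_rep_in_full_fun:
  assumes "a \<in> C"
  shows "fun_rep a \<in> full_fun C"
proof -
  have "fun_rep a s \<in> C" if "s \<in> seqs C" for s
    using assms that by (simp add: fun_rep_apply[OF assms order_refl that] q_closed image_seqs_subset)
  then show ?thesis
    using fun_rep_extensional[of a] by (auto simp: full_fun_def PiE_def)
qed

lemma fun_rep_e:
  assumes "1 \<le> i"
  shows "fun_rep (e i) = fe C i"
proof (rule extensionalityI[OF fun_rep_extensional])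
  show "fe C i \<in> extensional (seqs C)" by (simp add: fe_def)
  fix s assume s: "s \<in> seqs C"
  let ?n = "dim_of (e i) + i"
  have "fun_rep (e i) s = q ?n (e i) (map s [0..<?n])"
    using assms s e_closed by (intro fun_rep_apply) auto
  also have "\<dots> = s (i - 1)"
    using assms s by (simp add: q_var image_seqs_subset)
  finally show "fun_rep (e i) s = fe C i s"
    using s by (simp add: fe_apply)
qed

lemma fun_rep_sig:
  assumes "length xs = ar \<sigma>" "set xs \<subseteq> C"
  shows "fun_rep (sig \<sigma> xs) = fsig C sig \<sigma> (map fun_rep xs)"
proof (rule extensionalityI[OF fun_rep_extensional])
  show "fsig C sig \<sigma> (map fun_rep xs) \<in> extensional (seqs C)" by (simp add: fsig_def)
  fix s assume s: "s \<in> seqs C"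
  define n where "n = dim_of (sig \<sigma> xs) + sum_list (map dim_of xs)"
  have dims: "dim_of x \<le> n" if "x \<in> set xs" for x
    using that member_le_sum_list[of "dim_of x" "map dim_of xs"] by (simp add: n_def)
  have "fun_rep (sig \<sigma> xs) s = q n (sig \<sigma> xs) (map s [0..<n])"
    using assms s sig_closed by (intro fun_rep_apply) (auto simp: n_def)
  also have "\<dots> = sig \<sigma> (map (\<lambda>x. q n x (map s [0..<n])) xs)"
    using assms s by (intro q_sig) (auto simp: image_seqs_subset)
  also have "map (\<lambda>x. q n x (map s [0..<n])) xs = map (\<lambda>x. fun_rep x s) xs"
    using assms(2) s dims by (auto intro!: fun_rep_apply[symmetric])
  finally show "fun_rep (sig \<sigma> xs) s = fsig C sig \<sigma> (map fun_rep xs) s"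
    using s by (simp add: fsig_apply o_def)
qed

lemma map_q_padded:
  assumes "s \<in> seqs C" "length ys = n" "set ys \<subseteq> C" "n < N" "\<And>y. y \<in> set ys \<Longrightarrow> dim_of y \<le> N"
  shows "map (\<lambda>y. q N y (map s [0..<N])) (ys @ map e [n+1..<N+1])
    = map (\<lambda>k. if k < n then (map fun_rep ys ! k) s else s k) [0..<N]"
proof -
  have "map (\<lambda>y. q N y (map s [0..<N])) ys = map (\<lambda>k. (map fun_rep ys ! k) s) [0..<n]"
    using assms(2,3,5) \<open>s \<in> seqs C\<close>
    by (auto intro!: nth_equalityI fun_rep_apply[symmetric] simp: subset_code(1))
  moreover have "map (\<lambda>i. q N (e i) (map s [0..<N])) [n+1..<N+1] = map s [n..<N]"
    using assms(1,4) by (subst map_q_vars) (auto simp: image_seqs_subset drop_take take_map drop_map)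
  moreover have "[0..<N] = [0..<n] @ [n..<N]"
    using upt_add_eq_append[of 0 n "N - n"] \<open>n < N\<close> by simp
  ultimately show ?thesis
    by (simp add: o_def)
qed

lemma fun_rep_q:
  assumes "x \<in> C" "length ys = n" "set ys \<subseteq> C"
  shows "fun_rep (q n x ys) = fq C n (fun_rep x) (map fun_rep ys)"
proof (rule extensionalityI[OF fun_rep_extensional fq_extensional])
  fix s assume s: "s \<in> seqs C"
  define N where "N = Suc (n + dim_of x + dim_of (q n x ys) + sum_list (map dim_of ys))"
  let ?S = "map s [0..<N]"
  let ?t = "\<lambda>k. if k < n then (map fun_rep ys ! k) s else s k"
  have "n < N" and dim_x: "dim_of x \<le> N" and dim_qx: "dim_of (q n x ys) \<le> N"
    by (simp_all add: N_def)
  have dims: "dim_of y \<le> N" if "y \<in> set ys" for y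
    using that member_le_sum_list[of "dim_of y" "map dim_of ys"] by (simp add: N_def)
  have padded: "set (ys @ map e [n+1..<N+1]) \<subseteq> C"
    using assms(3) e_closed by auto
  have t: "?t \<in> seqs C"
    using s assms(2,3) fun_rep_in_full_fun by (intro seqs_update) auto
  have "fun_rep (q n x ys) s = q N (q n x ys) ?S"
    using assms s dim_qx q_closed by (intro fun_rep_apply) auto
  also have "\<dots> = q N (q N x (ys @ map e [n+1..<N+1])) ?S"
    using assms \<open>n < N\<close> by (subst q_pad_vars[of n N]) auto
  also have "\<dots> = q N x (map (\<lambda>y. q N y ?S) (ys @ map e [n+1..<N+1]))"
    using assms padded s \<open>n < N\<close> by (intro q_q) (auto simp: image_seqs_subset)
  also have "\<dots> = q N x (map ?t [0..<N])"
    using map_q_padded[OF s assms(2,3) \<open>n < N\<close> dims] by (simp only:)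
  also have "\<dots> = fun_rep x ?t"
    using assms t dim_x by (intro fun_rep_apply[symmetric]) auto
  also have "\<dots> = fq C n (fun_rep x) (map fun_rep ys) s"
    using s by (simp add: fq_apply)
  finally show "fun_rep (q n x ys) s = fq C n (fun_rep x) (map fun_rep ys) s" .
qed

lemma inj_on_fun_rep: "inj_on fun_rep C"
proof (rule inj_onI)
  fix a b assume a: "a \<in> C" and b: "b \<in> C" and eq: "fun_rep a = fun_rep b"
  define n where "n = dim_of a + dim_of b"
  let ?vars = "\<lambda>k. e (k + 1)"
  have vars: "?vars \<in> seqs C" and "map ?vars [0..<n] = map e [1..<n+1]"
    using e_closed by (auto simp: seqs_def map_upt_Suc intro: nth_equalityI)
  then have "fun_rep c ?vars = c" if "c \<in> C" "dim_of c \<le> n" for c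
    using that fun_rep_apply[OF that vars] q_vars[OF that(1)] by simp
  then show "a = b"
    using a b eq by (metis le_add1 le_add2 n_def)
qed

lemma block_alg_fun_rep_image: "block_alg ar C sig (fun_rep ` C)"
  unfolding block_alg_def clone_sig_alg_def tau_alg_def
proof (intro conjI allI impI ballI)
  fix \<sigma> xs assume xs: "length xs = ar \<sigma> \<and> set xs \<subseteq> fun_rep ` C"
  then obtain as where "xs = map fun_rep as" "set as \<subseteq> C"
    by (auto elim: set_subset_imageE)
  then show "fsig C sig \<sigma> xs \<in> fun_rep ` C"
    using xs by (simp add: fun_rep_sig[symmetric] sig_closed)
next
  fix n \<phi> \<psi>s assume args: "\<phi> \<in> fun_rep ` C \<and> length \<psi>s = n \<and> set \<psi>s \<subseteq> fun_rep ` C"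
  then obtain as where "\<psi>s = map fun_rep as" "set as \<subseteq> C"
    by (auto elim: set_subset_imageE)
  moreover obtain a where "a \<in> C" "\<phi> = fun_rep a" using args by blast
  ultimately show "fq C n \<phi> \<psi>s \<in> fun_rep ` C"
    using args by (simp add: fun_rep_q[symmetric] q_closed)
next
  fix i :: nat assume "1 \<le> i"
  then show "fe C i \<in> fun_rep ` C" using fun_rep_e e_closed by (metis imageI)
next
  fix \<phi> assume "\<phi> \<in> fun_rep ` C"
  then obtain a where "a \<in> C" "\<phi> = fun_rep a" by blast
  then show "\<exists>n f. finitary_op C n f \<and> \<phi> = top_ext C n f"
    using q_closed unfolding finitary_op_def fun_rep_def by blast
qed (use sig_closed fun_rep_in_full_fun in auto)

lemma clone_iso_fun_rep: "clone_iso ar C sig q e (fun_rep ` C) (fsig C sig) (fq C) (fe C) fun_rep"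
  unfolding clone_iso_def bij_betw_def
  using inj_on_fun_rep fun_rep_e fun_rep_sig fun_rep_q by auto

end

theorem theorem7p7:
  fixes ar :: "'sym \<Rightarrow> nat"
  shows "(\<forall>(C::'c set) sig q e. FiCA ar C sig q e \<longrightarrow>
            (\<exists>(A::'c set) F B h. block_alg ar A F B \<and>
                clone_iso ar C sig q e B (fsig A F) (fq A) (fe A) h))
       \<and> (\<forall>(A::'a set) F B (C::'c set) sig q e h.
            clone_sig_alg ar C sig q e \<and> block_alg ar A F B \<and>
            clone_iso ar C sig q e B (fsig A F) (fq A) (fe A) h \<longrightarrow> FiCA ar C sig q e)"
proof (intro conjI allI impI)
  fix C :: "'c set" and sig q e
  assume "FiCA ar C sig q e"
  then interpret finite_dim_clone_algebra ar C sig q e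
    by (simp add: FiCA_def finite_dim_clone_algebra_def finite_dim_clone_algebra_axioms_def
        clone_algebra_iff_clone_alg)
  show "\<exists>(A::'c set) F B h. block_alg ar A F B \<and>
          clone_iso ar C sig q e B (fsig A F) (fq A) (fe A) h"
    using block_alg_fun_rep_image clone_iso_fun_rep by blast
qed (meson FiCA_if_iso_block_alg)

end
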